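(* Consider random variables $Z\in\{w,b\}$, a discrete covariate vector $X$, potential first-stage outcomes $M(w),M(b)\in\{0,1\}$ and potential second-stage binary outcomes $Y(z,m)$ for $z\in\{w,b\}$, $m\in\{0,1\}$, with observed quantities $M = M(Z)$ and $Y = Y(Z,M)$. Let $\mathrm{CDE}_{\mathrm{Ob}} = \mathbb{E}[Y(b,1)-Y(w,1)\mid M=1]$, and let $\Delta_n$ be the stratified difference-in-means estimator computed from $n$ i.i.d. draws $(X_i,Z_i,Y_i)$ from the distribution of $(X,Z,Y)$ given $M=1$: \[ \Delta_n = \sum_x \Big[\tfrac{1}{n_{bx}}\textstyle\sum_{i\in S_{bx}} Y_i\Big]\tfrac{n_x}{n} - \sum_x \Big[\tfrac{1}{n_{wx}}\textstyle\sum_{i\in S_{wx}} Y_i\Big]\tfrac{n_x}{n}, \] where $S_{zx}=\{i: Z_i=z, X_i=x\}$, $n_{zx}=|S_{zx}|$ and $n_x=|\{i:X_i=x\}|$; "$\Delta_n$ is consistent" means $\Delta_n\to\mathrm{CDE}_{\mathrm{Ob}}$ almost surely. Define the conditions (each for all $z,z'\in\{w,b\}$, $m\in\{0,1\}$): (SeqI) sequential ignorability: $\{Y(z',m), M(z)\}\perp\!\!\!\perp Z \mid X$ and $Y(z',m)\perp\!\!\!\perp M \mid Z, X$; (SubI) subset ignorability: $Y(z,1)\perp\!\!\!\perp Z\mid X, M=1$; (TI) treatment ignorability: $M(z)\perp\!\!\!\perp Z\mid X$ and $Y(z',m)\perp\!\!\!\perp Z\mid M(w),M(b),X$; (MI)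 mediator ignorability: $Y(z,m)\perp\!\!\!\perp M(w)\mid Z=z, M(b)=1, X$; (MM) mediator monotonicity: $M(b)\ge M(w)$. Assume overlap holds: $\Pr(Z=z\mid X=x, M=1)>0$ for all $x$ and $z$. Then, among joint distributions satisfying overlap: (1) SeqI implies SubI; (2) SubI does not imply SeqI (there is a distribution satisfying SubI but not SeqI); (3) SubI implies $\Delta_n$ is consistent; (4) consistency of $\Delta_n$ does not imply SubI; (5) consistency of $\Delta_n$ does not imply TI; (6) TI does not imply consistency of $\Delta_n$; (7) TI, MI and MM jointly imply that $\Delta_n$ is consistent; (8) consistency of $\Delta_n$ does not imply that TI, MI and MM all hold.
   Context: Single-treatment version of a two-stage decision model: $Z$ is (perceived) race, affecting both a first-stage binary decision $M$ (e.g. arrest) with potential outcomes $M(z)$ and a second-stage binary decision $Y$ (e.g. charging) with potential outcomes $Y(z,m)$; consistency relations $M=M(Z)$ and $Y=Y(Z,M)$ hold. A non-implication "A does not imply B" means there exists a joint distribution of $(X,Z,M(w),M(b),(Y(z,m))_{z,m})$ satisfying overlap and A but not B. *)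

theory Defs
  imports "HOL-Probability.Probability"
begin

datatype race = W | B

text \<open>A unit: covariate X (discrete, encoded in nat), treatment Z,
  potential mediators M(z), potential outcomes Y(z,m).\<close>
record unit =
  Xc   :: nat
  Zr   :: race
  Mpot :: "race \<Rightarrow> bool"
  Ypot :: "race \<Rightarrow> bool \<Rightarrow> bool"

definition Mobs :: "unit \<Rightarrow> bool" where
  "Mobs u = Mpot u (Zr u)"

definition Yobs :: "unit \<Rightarrow> bool" where
  "Yobs u = Ypot u (Zr u) (Mobs u)"

abbreviation Pr :: "unit pmf \<Rightarrow> unit set \<Rightarrow> real" where
  "Pr P S \<equiv> measure_pmf.prob P S"

definition cond_indep_ev ::
  "unit pmf \<Rightarrow> unit set \<Rightarrow> (unit \<Rightarrow> 'a) \<Rightarrow> (unit \<Rightarrow> 'b) \<Rightarrow> (unit \<Rightarrow> 'c) \<Rightarrow> bool" where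
  "cond_indep_ev P E A C D \<longleftrightarrow>
     (\<forall>a b c.
        Pr P {u. u \<in> E \<and> A u = a \<and> C u = b \<and> D u = c} * Pr P {u. u \<in> E \<and> D u = c}
      = Pr P {u. u \<in> E \<and> A u = a \<and> D u = c} * Pr P {u. u \<in> E \<and> C u = b \<and> D u = c})"

abbreviation cond_indep ::
  "unit pmf \<Rightarrow> (unit \<Rightarrow> 'a) \<Rightarrow> (unit \<Rightarrow> 'b) \<Rightarrow> (unit \<Rightarrow> 'c) \<Rightarrow> bool" where
  "cond_indep P A C D \<equiv> cond_indep_ev P UNIV A C D"

definition overlap :: "unit pmf \<Rightarrow> bool" where
  "overlap P \<longleftrightarrow> Pr P {u. Mobs u} > 0 \<and>
     (\<forall>x z. Pr P {u. Mobs u \<and> Xc u = x} > 0 \<longrightarrow> Pr P {u. Mobs u \<and> Xc u = x \<and> Zr u = z} > 0)"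

definition SeqI :: "unit pmf \<Rightarrow> bool" where
  "SeqI P \<longleftrightarrow> (\<forall>z z' m.
      cond_indep P (\<lambda>u. (Ypot u z' m, Mpot u z)) Zr Xc \<and>
      cond_indep P (\<lambda>u. Ypot u z' m) Mobs (\<lambda>u. (Zr u, Xc u)))"

definition SubI :: "unit pmf \<Rightarrow> bool" where
  "SubI P \<longleftrightarrow> (\<forall>z. cond_indep_ev P {u. Mobs u} (\<lambda>u. Ypot u z True) Zr Xc)"

definition TI :: "unit pmf \<Rightarrow> bool" where
  "TI P \<longleftrightarrow> (\<forall>z z' m.
      cond_indep P (\<lambda>u. Mpot u z) Zr Xc \<and>
      cond_indep P (\<lambda>u. Ypot u z' m) Zr (\<lambda>u. (Mpot u W, Mpot u B, Xc u)))"

definition MI :: "unit pmf \<Rightarrow> bool" where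
  "MI P \<longleftrightarrow> (\<forall>z m.
      cond_indep_ev P {u. Zr u = z \<and> Mpot u B} (\<lambda>u. Ypot u z m) (\<lambda>u. Mpot u W) Xc)"

definition MM :: "unit pmf \<Rightarrow> bool" where
  "MM P \<longleftrightarrow> (\<forall>u \<in> set_pmf P. Mpot u W \<longrightarrow> Mpot u B)"

definition CDE_Ob :: "unit pmf \<Rightarrow> real" where
  "CDE_Ob P = measure_pmf.expectation (cond_pmf P {u. Mobs u})
                 (\<lambda>u. of_bool (Ypot u B True) - of_bool (Ypot u W True))"

definition obs_dist :: "unit pmf \<Rightarrow> (nat \<times> race \<times> bool) pmf" where
  "obs_dist P = map_pmf (\<lambda>u. (Xc u, Zr u, Yobs u)) (cond_pmf P {u. Mobs u})"

text \<open>Stratified difference-in-means estimator from a sample list of length n.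
  Division by zero yields 0 (Isabelle convention).\<close>
definition n_x :: "(nat \<times> race \<times> bool) list \<Rightarrow> nat \<Rightarrow> nat" where
  "n_x xs x = length (filter (\<lambda>(x', z', y). x' = x) xs)"

definition n_zx :: "(nat \<times> race \<times> bool) list \<Rightarrow> race \<Rightarrow> nat \<Rightarrow> nat" where
  "n_zx xs z x = length (filter (\<lambda>(x', z', y). z' = z \<and> x' = x) xs)"

definition ybar :: "(nat \<times> race \<times> bool) list \<Rightarrow> race \<Rightarrow> nat \<Rightarrow> real" where
  "ybar xs z x = (1 / real (n_zx xs z x)) *
      (\<Sum>(x', z', y) \<leftarrow> filter (\<lambda>(x', z', y). z' = z \<and> x' = x) xs. of_bool y)"

definition Delta :: "(nat \<times> race \<times> bool) list \<Rightarrow> real" where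
  "Delta xs =
     (\<Sum>x \<in> fst ` set xs. ybar xs B x * (real (n_x xs x) / real (length xs)))
   - (\<Sum>x \<in> fst ` set xs. ybar xs W x * (real (n_x xs x) / real (length xs)))"

definition consistent :: "unit pmf \<Rightarrow> bool" where
  "consistent P \<longleftrightarrow>
     (AE \<omega> in stream_space (measure_pmf (obs_dist P)).
        (\<lambda>n. Delta (stake n \<omega>)) \<longlonglongrightarrow> CDE_Ob P)"

end

theory Submission
  imports Defs
begin

text \<open>
  All positive statements reduce to mean ignorability,
  E[Y(z,1) | M=1, X=x] = E[Y(z,1) | M=1, Z=z, X=x].
  By a strong law of large numbers (from Hoeffding's inequality and Borel-Cantelli), \<open>\<Delta>\<^sub>n\<close>
  converges almost surely to its population analogue
  \<open>\<Sum>\<^sub>x P(X=x | M=1) (E[Y | M=1, Z=b, X=x] - E[Y | M=1, Z=w, X=x])\<close>; the empirical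
  frequencies of X are probability vectors, which controls the tail of the countable covariate space.
  Hence \<open>\<Delta>\<^sub>n\<close> is consistent iff this limit is CDE_Ob, and mean ignorability makes the two
  sums agree term by term. SeqI yields SubI by chaining Y(z,1) \<open>\<perp>\<close> Z | X with
  Y(z,1) \<open>\<perp>\<close> M | Z, X, and SubI yields mean ignorability directly. Under MM the units with
  M = 1 in either arm are made up of the principal strata (M(w), M(b)) = (1,1) and (0,1):
  TI makes the two arms exchangeable within a stratum and MI equates the outcome means of
  the two strata in arm z, which gives mean ignorability again. The non-implications are
  witnessed by explicit distributions on two or four units.
\<close>

section \<open>Strong law of large numbers for i.i.d. streams\<close>

lemma (in prob_space) distr_stream_space_snth:
  "distr (stream_space M) M (\<lambda>\<omega>. \<omega> !! i) = M"
proof -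
  interpret Pi: product_prob_space "\<lambda>_. M" UNIV ..
  have "distr (stream_space M) M (\<lambda>\<omega>. \<omega> !! i)
      = distr (\<Pi>\<^sub>M i\<in>UNIV. M) M ((\<lambda>\<omega>. \<omega> !! i) \<circ> to_stream)"
    by (subst stream_space_eq_distr) (rule distr_distr; simp)
  also have "\<dots> = M"
    using Pi.PiM_component[of i] by (simp add: o_def to_stream_def)
  finally show ?thesis .
qed

lemma (in prob_space) indep_vars_stream_space_snth:
  "prob_space.indep_vars (stream_space M) (\<lambda>_. M) (\<lambda>i \<omega>. \<omega> !! i) UNIV"
proof -
  interpret S: prob_space "stream_space M"
    by (rule prob_space_stream_space)
  interpret Pi: product_prob_space "\<lambda>_. M" UNIV ..
  have "distr (stream_space M) (\<Pi>\<^sub>M i\<in>UNIV. M) (\<lambda>\<omega>. \<lambda>i\<in>UNIV. \<omega> !! i)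
      = distr (\<Pi>\<^sub>M i\<in>UNIV. M) (\<Pi>\<^sub>M i\<in>UNIV. M) ((\<lambda>\<omega>. \<lambda>i\<in>UNIV. \<omega> !! i) \<circ> to_stream)"
    by (subst stream_space_eq_distr) (rule distr_distr; simp)
  also have "\<dots> = distr (\<Pi>\<^sub>M i\<in>UNIV. M) (\<Pi>\<^sub>M i\<in>UNIV. M) (\<lambda>\<omega>. \<omega>)"
    by (rule arg_cong[where f="distr _ _"]) (auto simp: restrict_def fun_eq_iff to_stream_def)
  also have "\<dots> = (\<Pi>\<^sub>M i\<in>UNIV. M)"
    by (simp add: distr_id2)
  also have "\<dots> = (\<Pi>\<^sub>M i\<in>UNIV. distr (stream_space M) M (\<lambda>\<omega>. \<omega> !! i))"
    using distr_stream_space_snth by simp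
  finally show ?thesis
    by (subst S.indep_vars_iff_distr_eq_PiM) auto
qed

lemma hoeffding_stream_space_pmf:
  fixes D :: "'a pmf" and f :: "'a \<Rightarrow> real"
  assumes f: "\<And>t. f t \<in> {0..1}" and "n > 0" and "\<epsilon> \<ge> 0"
  shows "measure (stream_space (measure_pmf D))
           {\<omega> \<in> space (stream_space (measure_pmf D)).
              \<bar>(\<Sum>i<n. f (\<omega> !! i)) / real n - measure_pmf.expectation D f\<bar> \<ge> \<epsilon>}
         \<le> 2 * exp (-2 * real n * \<epsilon>\<^sup>2)"
proof -
  interpret S: prob_space "stream_space (measure_pmf D)"
    by (rule prob_space.prob_space_stream_space, rule measure_pmf.prob_space_axioms)
  have distr_f: "distr (stream_space (measure_pmf D)) borel (\<lambda>\<omega>. f (\<omega> !! i)) = distr (measure_pmf D) borel f" for i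
    using distr_distr[of f "measure_pmf D" borel "\<lambda>\<omega>. \<omega> !! i" "stream_space (measure_pmf D)"]
    by (simp add: measure_pmf.distr_stream_space_snth o_def)
  have [measurable]: "f \<in> borel_measurable (measure_pmf D)"
    by simp
  have expectation: "measure_pmf.expectation D f = S.expectation (\<lambda>\<omega>. f (\<omega> !! 0))"
    using integral_distr[of "\<lambda>\<omega>. \<omega> !! 0" "stream_space (measure_pmf D)" "measure_pmf D" f]
      measure_pmf.distr_stream_space_snth[of D 0] by simp
  interpret Hoeffding_ineq_iid "stream_space (measure_pmf D)" "{..<n}" "\<lambda>i \<omega>. f (\<omega> !! i)"
      "\<lambda>\<omega>. f (\<omega> !! 0)" 0 1 "measure_pmf.expectation D f"
  proof unfold_locales
    show "S.indep_vars (\<lambda>_. borel) (\<lambda>i \<omega>. f (\<omega> !! i)) {..<n}"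
      by (rule S.indep_vars_subset[OF S.indep_vars_compose2[OF measure_pmf.indep_vars_stream_space_snth]])
        auto
  qed (use f distr_f distr_f[of 0] expectation in auto)
  show ?thesis
    using Hoeffding_ineq_abs_ge'[of \<epsilon>] assms by (simp add: lessThan_empty_iff)
qed

text \<open>Hoeffding's bound is summable in \<open>n\<close>, so Borel-Cantelli applies.\<close>

lemma AE_stream_space_pmf_averages_eventually_close:
  fixes D :: "'a pmf" and f :: "'a \<Rightarrow> real"
  assumes f: "\<And>t. f t \<in> {0..1}" and "e > 0"
  shows "AE \<omega> in stream_space (measure_pmf D).
           eventually (\<lambda>n. dist ((\<Sum>i<n. f (\<omega> !! i)) / real n) (measure_pmf.expectation D f) < e) sequentially"
proof -
  let ?S = "stream_space (measure_pmf D)" and ?\<mu> = "measure_pmf.expectation D f"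
  interpret S: prob_space ?S
    by (rule prob_space.prob_space_stream_space, rule measure_pmf.prob_space_axioms)
  have [measurable]: "f \<in> borel_measurable (measure_pmf D)"
    by simp
  define A where "A n = {\<omega> \<in> space ?S. \<bar>(\<Sum>i<n. f (\<omega> !! i)) / real n - ?\<mu>\<bar> \<ge> e}" for n
  have [measurable]: "A n \<in> sets ?S" for n
    unfolding A_def by measurable
  have bound: "measure ?S (A n) \<le> 2 * exp (-2 * e\<^sup>2) ^ n" for n
  proof (cases "n = 0")
    case True
    then show ?thesis
      using S.prob_le_1[of "A 0"] by (simp only: power_0 mult_1_right)
  next
    case False
    then have "measure ?S (A n) \<le> 2 * exp (-2 * real n * e\<^sup>2)"
      unfolding A_def using \<open>e > 0\<close> by (intro hoeffding_stream_space_pmf f) auto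
    also have "exp (-2 * real n * e\<^sup>2) = exp (-2 * e\<^sup>2) ^ n"
      by (subst exp_of_nat_mult[symmetric]) (simp add: algebra_simps)
    finally show ?thesis .
  qed
  have "summable (\<lambda>n. 2 * exp (-2 * e\<^sup>2) ^ n)"
    using \<open>e > 0\<close> by (intro summable_mult) (simp add: summable_geometric_iff)
  then have "summable (\<lambda>n. measure ?S (A n))"
    by (rule summable_comparison_test'[where N=0]) (use bound in auto)
  then have "AE \<omega> in ?S. eventually (\<lambda>n. \<omega> \<in> space ?S - A n) sequentially"
    by (intro borel_cantelli_AE1) (simp_all add: S.emeasure_eq_measure)
  then show ?thesis
    by (rule eventually_mono) (auto simp: A_def dist_real_def elim!: eventually_mono)
qed

lemma AE_stream_space_pmf_averages_tendsto:
  fixes D :: "'a pmf" and f :: "'a \<Rightarrow> real"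
  assumes f: "\<And>t. f t \<in> {0..1}"
  shows "AE \<omega> in stream_space (measure_pmf D).
           (\<lambda>n. (\<Sum>i<n. f (\<omega> !! i)) / real n) \<longlonglongrightarrow> measure_pmf.expectation D f"
proof -
  let ?avg = "\<lambda>\<omega> n. (\<Sum>i<n. f (\<omega> !! i)) / real n" and ?\<mu> = "measure_pmf.expectation D f"
  have "AE \<omega> in stream_space (measure_pmf D). \<forall>k::nat. eventually (\<lambda>n. dist (?avg \<omega> n) ?\<mu> < 1 / Suc k) sequentially"
    unfolding AE_all_countable by (intro allI AE_stream_space_pmf_averages_eventually_close f) simp
  then show ?thesis
  proof (rule eventually_mono)
    fix \<omega> assume close: "\<forall>k::nat. eventually (\<lambda>n. dist (?avg \<omega> n) ?\<mu> < 1 / Suc k) sequentially"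
    show "?avg \<omega> \<longlonglongrightarrow> ?\<mu>"
    proof (rule tendstoI)
      fix e :: real assume "e > 0"
      then obtain k :: nat where "1 / Suc k < e"
        by (rule nat_approx_posE)
      show "eventually (\<lambda>n. dist (?avg \<omega> n) ?\<mu> < e) sequentially"
        using close[rule_format, of k] by (rule eventually_mono) (use \<open>1 / Suc k < e\<close> in linarith)
    qed
  qed
qed

lemma expectation_of_bool:
  "measure_pmf.expectation D (\<lambda>t. of_bool (\<phi> t) :: real) = measure_pmf.prob D {t. \<phi> t}"
proof -
  have "(\<lambda>t. of_bool (\<phi> t) :: real) = indicator {t. \<phi> t}"
    by (simp add: indicator_def fun_eq_iff)
  then show ?thesis
    by simp
qed

lemma AE_stream_space_pmf_frequency_tendsto:
  "AE \<omega> in stream_space (measure_pmf D).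
     (\<lambda>n. real (length (filter \<phi> (stake n \<omega>))) / real n) \<longlonglongrightarrow> measure_pmf.prob D {t. \<phi> t}"
proof -
  have "real (length (filter \<phi> (stake n \<omega>))) = (\<Sum>i<n. of_bool (\<phi> (\<omega> !! i)))" for n \<omega>
    by (induction n) (simp_all add: stake_Suc del: stake.simps(2))
  then show ?thesis
    using AE_stream_space_pmf_averages_tendsto[of "\<lambda>t. of_bool (\<phi> t)" D] by (simp add: expectation_of_bool)
qed

section \<open>Almost sure limit of the stratified estimator\<close>

lemma sums_tail_dominated:
  fixes g p :: "nat \<Rightarrow> real"
  assumes "\<And>x. \<bar>g x\<bar> \<le> p x" "g sums L" "p sums 1"
  shows "\<bar>L - (\<Sum>x<N. g x)\<bar> \<le> 1 - (\<Sum>x<N. p x)"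
proof -
  have g_N: "(\<lambda>i. g (i + N)) sums (L - (\<Sum>x<N. g x))"
    using assms(2) by (rule sums_split_initial_segment)
  have p_N: "(\<lambda>i. p (i + N)) sums (1 - (\<Sum>x<N. p x))"
    using assms(3) by (rule sums_split_initial_segment)
  have "L - (\<Sum>x<N. g x) \<le> 1 - (\<Sum>x<N. p x)"
    by (rule sums_le[OF _ g_N p_N]) (use assms(1) in \<open>simp add: abs_le_iff\<close>)
  moreover have "- (1 - (\<Sum>x<N. p x)) \<le> L - (\<Sum>x<N. g x)"
    by (rule sums_le[OF _ sums_minus[OF p_N] g_N]) (use assms(1) in \<open>metis abs_le_iff minus_le_iff\<close>)
  ultimately show ?thesis
    by linarith
qed

text \<open>The weights \<open>w n\<close> are probability vectors converging pointwise to the probability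
  vector \<open>p\<close>, so no mass escapes to infinity: the tails beyond a fixed \<open>N\<close> are uniformly small.\<close>

lemma tendsto_sum_dominated_finite_support:
  fixes G w :: "nat \<Rightarrow> nat \<Rightarrow> real" and S :: "nat \<Rightarrow> nat set"
  assumes G_lim: "\<And>x. (\<lambda>n. G n x) \<longlonglongrightarrow> g x"
    and w_lim: "\<And>x. (\<lambda>n. w n x) \<longlonglongrightarrow> p x"
    and dom: "\<And>n x. \<bar>G n x\<bar> \<le> w n x"
    and fin: "\<And>n. finite (S n)"
    and w_outside: "\<And>n x. x \<notin> S n \<Longrightarrow> w n x = 0"
    and w_total: "eventually (\<lambda>n. (\<Sum>x\<in>S n. w n x) = 1) sequentially"
    and p: "p sums 1"
  shows "(\<lambda>n. \<Sum>x\<in>S n. G n x) \<longlonglongrightarrow> (\<Sum>x. g x)"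
proof (rule tendstoI)
  fix e :: real assume "e > 0"
  have g_le: "\<bar>g x\<bar> \<le> p x" for x
    by (rule tendsto_le[OF _ w_lim tendsto_rabs[OF G_lim]]) (auto simp: dom)
  then have "g sums (\<Sum>x. g x)"
    using p by (intro summable_sums summable_comparison_test[of g p]) (auto simp: sums_iff)
  have G_sums: "G n sums (\<Sum>x\<in>S n. G n x)" and w_sums: "w n sums (\<Sum>x\<in>S n. w n x)" for n
    using dom[of n] w_outside[of _ n] by (auto intro!: sums_finite fin) (metis abs_le_zero_iff)
  have G_tail: "\<bar>(\<Sum>x\<in>S n. G n x) - (\<Sum>x<N. G n x)\<bar> \<le> 1 - (\<Sum>x<N. w n x)"
    if "(\<Sum>x\<in>S n. w n x) = 1" for n N
    by (rule sums_tail_dominated[OF dom G_sums]) (use w_sums[of n] that in simp)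
  have "(\<lambda>N. \<Sum>x<N. p x) \<longlonglongrightarrow> 1"
    using p by (simp add: sums_def)
  then obtain N where N: "\<bar>(\<Sum>x<N. p x) - 1\<bar> < e / 4"
    using tendstoD[of _ _ _ "e / 4"] \<open>e > 0\<close> by (force simp: eventually_sequentially dist_real_def)
  have "(\<lambda>n. \<Sum>x<N. G n x) \<longlonglongrightarrow> (\<Sum>x<N. g x)" "(\<lambda>n. \<Sum>x<N. w n x) \<longlonglongrightarrow> (\<Sum>x<N. p x)"
    by (intro tendsto_sum G_lim w_lim)+
  from this[THEN tendstoD, of "e / 4"] \<open>e > 0\<close>
  have "eventually (\<lambda>n. \<bar>(\<Sum>x<N. G n x) - (\<Sum>x<N. g x)\<bar> < e / 4) sequentially"
    and "eventually (\<lambda>n. \<bar>(\<Sum>x<N. w n x) - (\<Sum>x<N. p x)\<bar> < e / 4) sequentially"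
    by (simp_all add: dist_real_def)
  then show "eventually (\<lambda>n. dist (\<Sum>x\<in>S n. G n x) (\<Sum>x. g x) < e) sequentially"
    using w_total
  proof eventually_elim
    case (elim n)
    then show ?case
      using G_tail[OF elim(3), of N] sums_tail_dominated[OF g_le \<open>g sums _\<close> p, of N] N
      unfolding dist_real_def abs_le_iff abs_less_iff by linarith
  qed
qed

definition arm_mean :: "(nat \<times> race \<times> bool) pmf \<Rightarrow> race \<Rightarrow> nat \<Rightarrow> real" where
  "arm_mean D z x =
     measure_pmf.prob D {(x', z', y). z' = z \<and> x' = x \<and> y} / measure_pmf.prob D {(x', z', y). z' = z \<and> x' = x}"

definition stratified_limit :: "(nat \<times> race \<times> bool) pmf \<Rightarrow> real" where
  "stratified_limit D = (\<Sum>x. measure_pmf.prob D {(x', z, y). x' = x} * (arm_mean D B x - arm_mean D W x))"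

lemma ybar_eq:
  "ybar xs z x = real (length (filter (\<lambda>(x', z', y). z' = z \<and> x' = x \<and> y) xs)) / real (n_zx xs z x)"
proof -
  have "(\<Sum>(x', z', y) \<leftarrow> filter P xs. of_bool y) = real (length (filter (\<lambda>t. P t \<and> snd (snd t)) xs))" for P
    by (induction xs) auto
  then show ?thesis
    unfolding ybar_def by (simp add: case_prod_unfold)
qed

lemma ybar_bounds: "0 \<le> ybar xs z x" "ybar xs z x \<le> 1"
proof -
  have "length (filter (\<lambda>(x', z', y). z' = z \<and> x' = x \<and> y) xs) \<le> n_zx xs z x"
    unfolding n_zx_def by (induction xs) auto
  then show "0 \<le> ybar xs z x" "ybar xs z x \<le> 1"
    by (auto simp: ybar_eq divide_le_eq_1)
qed

lemma n_x_eq_0: "x \<notin> fst ` set xs \<Longrightarrow> n_x xs x = 0"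
  by (force simp: n_x_def filter_empty_conv)

lemma sum_n_x: "(\<Sum>x\<in>fst ` set xs. real (n_x xs x)) = real (length xs)"
proof -
  have "n_x xs x = count_list (map fst xs) x" for x
    by (simp add: n_x_def count_list_eq_length_filter filter_map o_def case_prod_unfold eq_commute)
  then show ?thesis
    using sum_count_set[of "map fst xs" "fst ` set xs"] by (simp flip: of_nat_sum)
qed

lemma Delta_eq:
  "Delta xs = (\<Sum>x\<in>fst ` set xs. (ybar xs B x - ybar xs W x) * (real (n_x xs x) / real (length xs)))"
  by (simp add: Delta_def sum_subtractf[symmetric] algebra_simps)

lemma sums_prob_vimage:
  fixes D :: "'a pmf" and h :: "'a \<Rightarrow> nat"
  shows "(\<lambda>x. measure_pmf.prob D (A \<inter> h -` {x})) sums measure_pmf.prob D A"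
proof -
  have "(\<lambda>x. measure_pmf.prob D (A \<inter> h -` {x})) sums measure_pmf.prob D (\<Union>x. A \<inter> h -` {x})"
    by (rule measure_pmf.finite_measure_UNION) (auto simp: disjoint_family_on_def)
  then show ?thesis
    by (simp flip: Int_UN_distrib vimage_UN)
qed

lemma tendsto_mult_bounded:
  fixes a b :: "nat \<Rightarrow> real"
  assumes "\<And>n. \<bar>a n\<bar> \<le> 1" "b \<longlonglongrightarrow> \<beta>" "\<beta> \<noteq> 0 \<Longrightarrow> a \<longlonglongrightarrow> \<alpha>"
  shows "(\<lambda>n. a n * b n) \<longlonglongrightarrow> \<alpha> * \<beta>"
proof (cases "\<beta> = 0")
  case True
  have bound: "norm (a n * b n) \<le> \<bar>b n\<bar>" for n
    unfolding real_norm_def abs_mult by (rule mult_left_le_one_le) (simp_all add: assms(1))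
  have "(\<lambda>n. \<bar>b n\<bar>) \<longlonglongrightarrow> 0"
    using tendsto_rabs[OF assms(2)] True by simp
  then have "(\<lambda>n. a n * b n) \<longlonglongrightarrow> 0"
    by (rule Lim_null_comparison[OF always_eventually[OF allI[OF bound]]])
  with True show ?thesis
    by simp
next
  case False
  then show ?thesis
    using assms(2,3) by (intro tendsto_mult)
qed

lemma ybar_tendsto_arm_mean:
  assumes "(\<lambda>n. real (n_zx (xs n) z x) / real n) \<longlonglongrightarrow> measure_pmf.prob D {(x', z', y). z' = z \<and> x' = x}"
    and "(\<lambda>n. real (length (filter (\<lambda>(x', z', y). z' = z \<and> x' = x \<and> y) (xs n))) / real n)
           \<longlonglongrightarrow> measure_pmf.prob D {(x', z', y). z' = z \<and> x' = x \<and> y}"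
    and "measure_pmf.prob D {(x', z', y). z' = z \<and> x' = x} \<noteq> 0"
  shows "(\<lambda>n. ybar (xs n) z x) \<longlonglongrightarrow> arm_mean D z x"
proof -
  let ?y = "\<lambda>n. real (length (filter (\<lambda>(x', z', y). z' = z \<and> x' = x \<and> y) (xs n)))"
  have "(\<lambda>n. (?y n / real n) / (real (n_zx (xs n) z x) / real n)) \<longlonglongrightarrow> arm_mean D z x"
    unfolding arm_mean_def by (intro tendsto_divide assms)
  moreover have "eventually (\<lambda>n. (?y n / real n) / (real (n_zx (xs n) z x) / real n) = ybar (xs n) z x) sequentially"
    using eventually_gt_at_top[of 0] by eventually_elim (simp add: ybar_eq)
  ultimately show ?thesis
    by (rule Lim_transform_eventually)
qed

lemma Delta_tendsto_stratified_limit: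
  fixes xs :: "nat \<Rightarrow> (nat \<times> race \<times> bool) list" and D :: "(nat \<times> race \<times> bool) pmf"
  assumes len: "\<And>n. length (xs n) = n"
    and freq_x: "\<And>x. (\<lambda>n. real (n_x (xs n) x) / real n) \<longlonglongrightarrow> measure_pmf.prob D {(x', z, y). x' = x}"
    and freq_zx: "\<And>z x. (\<lambda>n. real (n_zx (xs n) z x) / real n)
                    \<longlonglongrightarrow> measure_pmf.prob D {(x', z', y). z' = z \<and> x' = x}"
    and freq_zxy: "\<And>z x. (\<lambda>n. real (length (filter (\<lambda>(x', z', y). z' = z \<and> x' = x \<and> y) (xs n))) / real n)
                    \<longlonglongrightarrow> measure_pmf.prob D {(x', z', y). z' = z \<and> x' = x \<and> y}"
    and overlap: "\<And>z x. measure_pmf.prob D {(x', z, y). x' = x} \<noteq> 0 \<Longrightarrow>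
                    measure_pmf.prob D {(x', z', y). z' = z \<and> x' = x} \<noteq> 0"
  shows "(\<lambda>n. Delta (xs n)) \<longlonglongrightarrow> stratified_limit D"
proof -
  define p where "p x = measure_pmf.prob D {(x', z, y). x' = x}" for x
  have freq_p: "(\<lambda>n. real (n_x (xs n) x) / real n) \<longlonglongrightarrow> p x" for x
    using freq_x by (simp add: p_def)
  have ybar_diff: "\<bar>ybar (xs n) B x - ybar (xs n) W x\<bar> \<le> 1" for n x
    using ybar_bounds[of "xs n" B x] ybar_bounds[of "xs n" W x] by linarith
  let ?G = "\<lambda>n x. (ybar (xs n) B x - ybar (xs n) W x) * (real (n_x (xs n) x) / real n)"
  have "(\<lambda>n. \<Sum>x\<in>fst ` set (xs n). ?G n x) \<longlonglongrightarrow> (\<Sum>x. (arm_mean D B x - arm_mean D W x) * p x)"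
  proof (rule tendsto_sum_dominated_finite_support[OF _ freq_p])
    show "(\<lambda>n. ?G n x) \<longlonglongrightarrow> (arm_mean D B x - arm_mean D W x) * p x" for x
    proof (rule tendsto_mult_bounded[OF ybar_diff freq_p])
      assume "p x \<noteq> 0"
      then have "measure_pmf.prob D {(x', z', y). z' = z \<and> x' = x} \<noteq> 0" for z
        using overlap by (simp add: p_def)
      then show "(\<lambda>n. ybar (xs n) B x - ybar (xs n) W x) \<longlonglongrightarrow> arm_mean D B x - arm_mean D W x"
        by (intro tendsto_diff ybar_tendsto_arm_mean freq_zx freq_zxy)
    qed
    show "\<bar>?G n x\<bar> \<le> real (n_x (xs n) x) / real n" for n x
    proof -
      have freq_nonneg: "0 \<le> real (n_x (xs n) x) / real n"
        by simp
      show ?thesis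
        unfolding abs_mult abs_of_nonneg[OF freq_nonneg]
        by (rule mult_left_le_one_le[OF freq_nonneg abs_ge_zero ybar_diff])
    qed
    show "eventually (\<lambda>n. (\<Sum>x\<in>fst ` set (xs n). real (n_x (xs n) x) / real n) = 1) sequentially"
      using eventually_gt_at_top[of 0] by eventually_elim (simp add: sum_divide_distrib[symmetric] sum_n_x len)
    show "p sums 1"
      using sums_prob_vimage[of D UNIV fst] unfolding p_def by (simp add: vimage_def case_prod_unfold)
  qed (simp_all add: n_x_eq_0)
  then show ?thesis
    by (simp add: Delta_eq len stratified_limit_def p_def mult.commute)
qed

lemma UNIV_race: "UNIV = {W, B}"
  using race.exhaust by auto

lemma AE_Delta_tendsto_stratified_limit:
  fixes D :: "(nat \<times> race \<times> bool) pmf"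
  assumes overlap: "\<And>z x. measure_pmf.prob D {(x', z, y). x' = x} \<noteq> 0 \<Longrightarrow>
                    measure_pmf.prob D {(x', z', y). z' = z \<and> x' = x} \<noteq> 0"
  shows "AE \<omega> in stream_space (measure_pmf D). (\<lambda>n. Delta (stake n \<omega>)) \<longlonglongrightarrow> stratified_limit D"
proof -
  have freq: "AE \<omega> in stream_space (measure_pmf D). \<forall>z\<in>UNIV. \<forall>x.
      (\<lambda>n. real (length (filter (\<phi> z x) (stake n \<omega>))) / real n) \<longlonglongrightarrow> measure_pmf.prob D {t. \<phi> z x t}"
    for \<phi> :: "race \<Rightarrow> nat \<Rightarrow> nat \<times> race \<times> bool \<Rightarrow> bool"
    by (intro AE_finite_allI) (simp_all add: UNIV_race AE_all_countable AE_stream_space_pmf_frequency_tendsto)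
  show ?thesis
    using freq[of "\<lambda>z x (x', z', y). x' = x"] freq[of "\<lambda>z x (x', z', y). z' = z \<and> x' = x"]
      freq[of "\<lambda>z x (x', z', y). z' = z \<and> x' = x \<and> y"]
  proof eventually_elim
    case (elim \<omega>)
    then show ?case
      by (intro Delta_tendsto_stratified_limit overlap) (simp_all add: n_x_def n_zx_def)
  qed
qed

section \<open>Conditional probabilities\<close>

definition cond_prob :: "'a pmf \<Rightarrow> ('a \<Rightarrow> bool) \<Rightarrow> ('a \<Rightarrow> bool) \<Rightarrow> real" where
  "cond_prob P \<phi> \<psi> = measure_pmf.prob P {u. \<phi> u \<and> \<psi> u} / measure_pmf.prob P {u. \<psi> u}"

text \<open>\<open>Pr(\<phi> | \<psi>) = \<mu>\<close> in product form. It holds for every \<open>\<mu>\<close> when \<open>Pr \<psi> = 0\<close>,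
  which saves case distinctions on empty strata.\<close>

definition has_cond_prob :: "'a pmf \<Rightarrow> ('a \<Rightarrow> bool) \<Rightarrow> ('a \<Rightarrow> bool) \<Rightarrow> real \<Rightarrow> bool" where
  "has_cond_prob P \<phi> \<psi> \<mu> \<longleftrightarrow> measure_pmf.prob P {u. \<phi> u \<and> \<psi> u} = \<mu> * measure_pmf.prob P {u. \<psi> u}"

lemma has_cond_prob_cond_prob: "has_cond_prob P \<phi> \<psi> (cond_prob P \<phi> \<psi>)"
proof -
  have "measure_pmf.prob P {u. \<phi> u \<and> \<psi> u} \<le> measure_pmf.prob P {u. \<psi> u}"
    by (rule measure_pmf.finite_measure_mono) auto
  then show ?thesis
    by (cases "measure_pmf.prob P {u. \<psi> u} = 0") (simp_all add: has_cond_prob_def cond_prob_def antisym)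
qed

lemma has_cond_prob_null: "measure_pmf.prob P {u. \<psi> u} = 0 \<Longrightarrow> has_cond_prob P \<phi> \<psi> \<mu>"
  using has_cond_prob_cond_prob[of P \<phi> \<psi>] by (simp add: has_cond_prob_def)

lemma prob_neq_0_mono:
  assumes "\<And>u. \<phi> u \<Longrightarrow> \<psi> u" "measure_pmf.prob P {u. \<phi> u} \<noteq> 0"
  shows "measure_pmf.prob P {u. \<psi> u} \<noteq> 0"
proof -
  have "measure_pmf.prob P {u. \<phi> u} \<le> measure_pmf.prob P {u. \<psi> u}"
    using assms(1) by (intro measure_pmf.finite_measure_mono) auto
  with assms(2) show ?thesis
    using measure_nonneg[of P "{u. \<phi> u}"] by linarith
qed

lemma has_cond_prob_null_mono:
  "(\<And>u. \<psi> u \<Longrightarrow> \<psi>' u) \<Longrightarrow> measure_pmf.prob P {u. \<psi>' u} = 0 \<Longrightarrow> has_cond_prob P \<phi> \<psi> \<mu>"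
  using prob_neq_0_mono[of \<psi> \<psi>' P] has_cond_prob_null by blast

lemma has_cond_prob_iff:
  "measure_pmf.prob P {u. \<psi> u} \<noteq> 0 \<Longrightarrow> has_cond_prob P \<phi> \<psi> \<mu> \<longleftrightarrow> \<mu> = cond_prob P \<phi> \<psi>"
  by (auto simp: has_cond_prob_def cond_prob_def)

lemma prob_disj:
  assumes "\<And>u. \<not> (\<psi>\<^sub>1 u \<and> \<psi>\<^sub>2 u)"
  shows "measure_pmf.prob P {u. \<psi>\<^sub>1 u \<or> \<psi>\<^sub>2 u} = measure_pmf.prob P {u. \<psi>\<^sub>1 u} + measure_pmf.prob P {u. \<psi>\<^sub>2 u}"
proof -
  have "{u. \<psi>\<^sub>1 u \<or> \<psi>\<^sub>2 u} = {u. \<psi>\<^sub>1 u} \<union> {u. \<psi>\<^sub>2 u}"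
    by auto
  then show ?thesis
    using assms by (simp add: measure_pmf.finite_measure_Union disjoint_iff)
qed

lemma prob_split_bool:
  "measure_pmf.prob P {u. \<phi> u} = measure_pmf.prob P {u. \<phi> u \<and> \<psi> u} + measure_pmf.prob P {u. \<phi> u \<and> \<not> \<psi> u}"
  using prob_disj[of "\<lambda>u. \<phi> u \<and> \<psi> u" "\<lambda>u. \<phi> u \<and> \<not> \<psi> u" P] by (simp add: conj_disj_distribL[symmetric])

lemma prob_cong_set_pmf:
  "(\<And>u. u \<in> set_pmf P \<Longrightarrow> \<phi> u \<longleftrightarrow> \<psi> u) \<Longrightarrow> measure_pmf.prob P {u. \<phi> u} = measure_pmf.prob P {u. \<psi> u}"
  by (rule measure_eq_AE) (auto simp: AE_measure_pmf_iff)

lemma has_cond_prob_disj: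
  assumes "\<And>u. \<not> (\<psi>\<^sub>1 u \<and> \<psi>\<^sub>2 u)" "has_cond_prob P \<phi> \<psi>\<^sub>1 \<mu>" "has_cond_prob P \<phi> \<psi>\<^sub>2 \<mu>"
  shows "has_cond_prob P \<phi> (\<lambda>u. \<psi>\<^sub>1 u \<or> \<psi>\<^sub>2 u) \<mu>"
proof -
  have "{u. \<phi> u \<and> (\<psi>\<^sub>1 u \<or> \<psi>\<^sub>2 u)} = {u. (\<phi> u \<and> \<psi>\<^sub>1 u) \<or> (\<phi> u \<and> \<psi>\<^sub>2 u)}"
    by auto
  then show ?thesis
    using assms prob_disj[of \<psi>\<^sub>1 \<psi>\<^sub>2 P] prob_disj[of "\<lambda>u. \<phi> u \<and> \<psi>\<^sub>1 u" "\<lambda>u. \<phi> u \<and> \<psi>\<^sub>2 u" P]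
    by (simp add: has_cond_prob_def distrib_left)
qed

lemma has_cond_prob_diff:
  assumes "\<And>u. u \<in> set_pmf P \<Longrightarrow> \<phi>\<^sub>1 u \<Longrightarrow> \<phi>\<^sub>2 u"
    and "has_cond_prob P \<phi>\<^sub>1 \<psi> c\<^sub>1" "has_cond_prob P \<phi>\<^sub>2 \<psi> c\<^sub>2"
  shows "has_cond_prob P (\<lambda>u. \<not> \<phi>\<^sub>1 u \<and> \<phi>\<^sub>2 u) \<psi> (c\<^sub>2 - c\<^sub>1)"
proof -
  have "measure_pmf.prob P {u. \<phi>\<^sub>2 u \<and> \<psi> u} =
          measure_pmf.prob P {u. \<phi>\<^sub>1 u \<and> \<psi> u} + measure_pmf.prob P {u. (\<not> \<phi>\<^sub>1 u \<and> \<phi>\<^sub>2 u) \<and> \<psi> u}"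
    using prob_split_bool[of P "\<lambda>u. \<phi>\<^sub>2 u \<and> \<psi> u" \<phi>\<^sub>1]
      prob_cong_set_pmf[of P "\<lambda>u. (\<phi>\<^sub>2 u \<and> \<psi> u) \<and> \<phi>\<^sub>1 u" "\<lambda>u. \<phi>\<^sub>1 u \<and> \<psi> u"] assms(1)
    by (auto simp: conj_ac)
  with assms(2,3) show ?thesis
    by (simp add: has_cond_prob_def left_diff_distrib)
qed

lemma has_cond_prob_cong_set_pmf:
  assumes "\<And>u. u \<in> set_pmf P \<Longrightarrow> \<phi> u \<longleftrightarrow> \<phi>' u" "\<And>u. u \<in> set_pmf P \<Longrightarrow> \<psi> u \<longleftrightarrow> \<psi>' u"
  shows "has_cond_prob P \<phi> \<psi> \<mu> \<longleftrightarrow> has_cond_prob P \<phi>' \<psi>' \<mu>"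
  unfolding has_cond_prob_def using assms
  by (simp add: prob_cong_set_pmf[of P "\<lambda>u. \<phi> u \<and> \<psi> u" "\<lambda>u. \<phi>' u \<and> \<psi>' u"] prob_cong_set_pmf[of P \<psi> \<psi>'])

lemma has_cond_prob_transfer:
  assumes S: "has_cond_prob P S \<psi>\<^sub>1 c" "has_cond_prob P S \<psi>\<^sub>2 c"
    and Y: "has_cond_prob P Y (\<lambda>u. S u \<and> \<psi>\<^sub>1 u) \<nu>" "has_cond_prob P Y (\<lambda>u. S u \<and> \<psi>\<^sub>2 u) \<nu>"
    and "measure_pmf.prob P {u. \<psi>\<^sub>1 u} \<noteq> 0" "has_cond_prob P Y (\<lambda>u. S u \<and> \<psi>\<^sub>1 u) \<mu>"
  shows "has_cond_prob P Y (\<lambda>u. S u \<and> \<psi>\<^sub>2 u) \<mu>"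
proof (cases "measure_pmf.prob P {u. S u \<and> \<psi>\<^sub>1 u} = 0")
  case True
  with S assms(5) have "measure_pmf.prob P {u. S u \<and> \<psi>\<^sub>2 u} = 0"
    by (simp add: has_cond_prob_def)
  then show ?thesis
    by (rule has_cond_prob_null)
next
  case False
  with Y assms(6) show ?thesis
    by (simp add: has_cond_prob_iff)
qed

lemma cond_indep_ev_has_cond_prob:
  assumes "cond_indep_ev P E A C D"
  shows "has_cond_prob P (\<lambda>u. A u = a) (\<lambda>u. u \<in> E \<and> C u = b \<and> D u = c)
           (cond_prob P (\<lambda>u. A u = a) (\<lambda>u. u \<in> E \<and> D u = c))"
proof (cases "Pr P {u. u \<in> E \<and> D u = c} = 0")
  case True
  then show ?thesis
    by (rule has_cond_prob_null_mono[rotated]) simp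
next
  case False
  then show ?thesis
    using assms[unfolded cond_indep_ev_def, rule_format, of a b c]
    by (simp add: has_cond_prob_def cond_prob_def field_simps conj_ac)
qed

lemma cond_indep_evI_race:
  fixes C :: "unit \<Rightarrow> race"
  assumes common: "\<And>a r c. has_cond_prob P (\<lambda>u. A u = a) (\<lambda>u. u \<in> E \<and> C u = r \<and> D u = c) (\<kappa> a c)"
  shows "cond_indep_ev P E A C D"
  unfolding cond_indep_ev_def
proof (intro allI)
  fix a b c
  have "has_cond_prob P (\<lambda>u. A u = a)
          (\<lambda>u. (u \<in> E \<and> C u = W \<and> D u = c) \<or> (u \<in> E \<and> C u = B \<and> D u = c)) (\<kappa> a c)"
    by (intro has_cond_prob_disj common) auto
  then have "has_cond_prob P (\<lambda>u. A u = a) (\<lambda>u. u \<in> E \<and> D u = c) (\<kappa> a c)"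
    by (rule has_cond_prob_cong_set_pmf[THEN iffD1, rotated 2]) (use race.exhaust in auto)
  with common[of a b c] show
    "Pr P {u. u \<in> E \<and> A u = a \<and> C u = b \<and> D u = c} * Pr P {u. u \<in> E \<and> D u = c}
   = Pr P {u. u \<in> E \<and> A u = a \<and> D u = c} * Pr P {u. u \<in> E \<and> C u = b \<and> D u = c}"
    by (simp add: has_cond_prob_def conj_ac)
qed

lemma cond_indep_ev_pair_fst:
  fixes A' :: "unit \<Rightarrow> bool"
  assumes pair: "cond_indep_ev P E (\<lambda>u. (A u, A' u)) C D"
  shows "cond_indep_ev P E A C D"
  unfolding cond_indep_ev_def
proof (intro allI)
  fix a b c
  have split: "Pr P {u. u \<in> E \<and> A u = a \<and> Q u}
      = Pr P {u. u \<in> E \<and> (A u = a \<and> A' u = True) \<and> Q u} + Pr P {u. u \<in> E \<and> (A u = a \<and> A' u = False) \<and> Q u}"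
    for Q
    using prob_split_bool[of P "\<lambda>u. u \<in> E \<and> A u = a \<and> Q u" A'] by (simp add: conj_ac)
  have "Pr P {u. u \<in> E \<and> (A u = a \<and> A' u = a') \<and> C u = b \<and> D u = c} * Pr P {u. u \<in> E \<and> D u = c}
      = Pr P {u. u \<in> E \<and> (A u = a \<and> A' u = a') \<and> D u = c} * Pr P {u. u \<in> E \<and> C u = b \<and> D u = c}" for a'
    using pair[unfolded cond_indep_ev_def, rule_format, of "(a, a')" b c] by simp
  from this[of True] this[of False] show
    "Pr P {u. u \<in> E \<and> A u = a \<and> C u = b \<and> D u = c} * Pr P {u. u \<in> E \<and> D u = c}
   = Pr P {u. u \<in> E \<and> A u = a \<and> D u = c} * Pr P {u. u \<in> E \<and> C u = b \<and> D u = c}"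
    unfolding split[of "\<lambda>u. C u = b \<and> D u = c"] split[of "\<lambda>u. D u = c"] by (simp add: algebra_simps)
qed

lemma cond_indep_ev_if_function:
  assumes "\<And>u. u \<in> set_pmf P \<Longrightarrow> A u = h (D u)"
  shows "cond_indep_ev P E A C D"
  unfolding cond_indep_ev_def
proof (intro allI)
  fix a b c
  have "Pr P {u. u \<in> E \<and> A u = a \<and> \<psi> u \<and> D u = c} = (if h c = a then Pr P {u. u \<in> E \<and> \<psi> u \<and> D u = c} else 0)"
    for \<psi>
    by (subst prob_cong_set_pmf[where \<psi>="\<lambda>u. h c = a \<and> u \<in> E \<and> \<psi> u \<and> D u = c"]) (auto simp: assms)
  from this[of "\<lambda>u. C u = b"] this[of "\<lambda>_. True"] show
    "Pr P {u. u \<in> E \<and> A u = a \<and> C u = b \<and> D u = c} * Pr P {u. u \<in> E \<and> D u = c}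
   = Pr P {u. u \<in> E \<and> A u = a \<and> D u = c} * Pr P {u. u \<in> E \<and> C u = b \<and> D u = c}"
    by simp
qed

section \<open>Consistency under mean ignorability\<close>

lemma prob_cond_pmf:
  assumes "measure_pmf.prob P S \<noteq> 0"
  shows "measure_pmf.prob (cond_pmf P S) A = measure_pmf.prob P (S \<inter> A) / measure_pmf.prob P S"
proof -
  have "set_pmf P \<inter> S \<noteq> {}"
    using assms by (metis measure_Int_set_pmf measure_empty inf_commute)
  with assms show ?thesis
    by (simp add: cond_pmf.rep_eq measure_pmf.emeasure_eq_measure)
qed

lemma prob_obs_dist:
  assumes "Pr P {u. Mobs u} \<noteq> 0"
  shows "measure_pmf.prob (obs_dist P) A = Pr P {u. Mobs u \<and> (Xc u, Zr u, Yobs u) \<in> A} / Pr P {u. Mobs u}"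
  using assms by (simp add: obs_dist_def prob_cond_pmf vimage_def Int_def)

lemma arm_mean_obs_dist:
  assumes "Pr P {u. Mobs u} \<noteq> 0"
  shows "arm_mean (obs_dist P) z x = cond_prob P (\<lambda>u. Ypot u z True) (\<lambda>u. Mobs u \<and> Zr u = z \<and> Xc u = x)"
proof -
  have "{u. Mobs u \<and> Zr u = z \<and> Xc u = x \<and> Yobs u} = {u. Ypot u z True \<and> Mobs u \<and> Zr u = z \<and> Xc u = x}"
    by (auto simp: Yobs_def)
  then show ?thesis
    using assms by (simp add: arm_mean_def cond_prob_def prob_obs_dist conj_ac)
qed

lemma overlap_arm_pos:
  assumes "overlap P" and "Pr P {u. Mobs u \<and> Xc u = x} \<noteq> 0"
  shows "Pr P {u. Mobs u \<and> Zr u = z \<and> Xc u = x} \<noteq> 0"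
proof -
  have "Pr P {u. Mobs u \<and> Xc u = x} > 0"
    using assms(2) measure_nonneg[of P] by (simp add: order_less_le)
  with assms(1) have "Pr P {u. Mobs u \<and> Xc u = x \<and> Zr u = z} > 0"
    by (simp add: overlap_def)
  then show ?thesis
    by (simp add: conj_ac)
qed

lemma consistent_iff_stratified_limit:
  assumes "overlap P"
  shows "consistent P \<longleftrightarrow> stratified_limit (obs_dist P) = CDE_Ob P"
proof -
  let ?S = "stream_space (measure_pmf (obs_dist P))"
  have M: "Pr P {u. Mobs u} \<noteq> 0"
    using assms by (auto simp: overlap_def)
  have "measure_pmf.prob (obs_dist P) {(x', z, y). x' = x} = Pr P {u. Mobs u \<and> Xc u = x} / Pr P {u. Mobs u}"
    and "measure_pmf.prob (obs_dist P) {(x', z', y). z' = z \<and> x' = x}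
           = Pr P {u. Mobs u \<and> Zr u = z \<and> Xc u = x} / Pr P {u. Mobs u}" for z x
    unfolding prob_obs_dist[OF M] by (simp_all add: conj_commute)
  then have "measure_pmf.prob (obs_dist P) {(x', z', y). z' = z \<and> x' = x} \<noteq> 0"
    if "measure_pmf.prob (obs_dist P) {(x', z, y). x' = x} \<noteq> 0" for z x
    using that M overlap_arm_pos[OF assms, of x z] by simp
  then have limit: "AE \<omega> in ?S. (\<lambda>n. Delta (stake n \<omega>)) \<longlonglongrightarrow> stratified_limit (obs_dist P)"
    by (rule AE_Delta_tendsto_stratified_limit)
  interpret S: prob_space ?S
    by (rule prob_space.prob_space_stream_space, rule measure_pmf.prob_space_axioms)
  show ?thesis
  proof
    assume "consistent P"
    with limit have "AE \<omega> in ?S. stratified_limit (obs_dist P) = CDE_Ob P"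
      unfolding consistent_def by eventually_elim (rule LIMSEQ_unique)
    then show "stratified_limit (obs_dist P) = CDE_Ob P"
      by simp
  next
    assume "stratified_limit (obs_dist P) = CDE_Ob P"
    with limit show "consistent P"
      by (simp add: consistent_def)
  qed
qed

lemma CDE_Ob_eq:
  assumes "Pr P {u. Mobs u} \<noteq> 0"
  shows "CDE_Ob P = (Pr P {u. Mobs u \<and> Ypot u B True} - Pr P {u. Mobs u \<and> Ypot u W True}) / Pr P {u. Mobs u}"
proof -
  let ?Q = "cond_pmf P {u. Mobs u}"
  have "integrable (measure_pmf ?Q) (\<lambda>u. of_bool (Ypot u z True) :: real)" for z
    by (rule measure_pmf.integrable_const_bound[where B=1]) auto
  then have "CDE_Ob P = measure_pmf.prob ?Q {u. Ypot u B True} - measure_pmf.prob ?Q {u. Ypot u W True}"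
    by (simp add: CDE_Ob_def expectation_of_bool)
  then show ?thesis
    using assms by (simp add: prob_cond_pmf Int_def diff_divide_distrib)
qed

text \<open>E[Y(z,1) | M=1, X=x] = E[Y(z,1) | M=1, Z=z, X=x]: the consequence of SubI that makes the
  stratified estimator target CDE_Ob.\<close>

definition mean_ignorability :: "unit pmf \<Rightarrow> bool" where
  "mean_ignorability P \<longleftrightarrow> (\<forall>z x.
     has_cond_prob P (\<lambda>u. Ypot u z True) (\<lambda>u. Mobs u \<and> Xc u = x)
       (cond_prob P (\<lambda>u. Ypot u z True) (\<lambda>u. Mobs u \<and> Zr u = z \<and> Xc u = x)))"

lemma stratified_limit_eq_CDE_Ob:
  assumes "overlap P" and "mean_ignorability P"
  shows "stratified_limit (obs_dist P) = CDE_Ob P"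
proof -
  have M: "Pr P {u. Mobs u} \<noteq> 0"
    using assms by (simp add: overlap_def)
  have stratum: "measure_pmf.prob (obs_dist P) {(x', z, y). x' = x}
                * (arm_mean (obs_dist P) B x - arm_mean (obs_dist P) W x)
            = (Pr P {u. Mobs u \<and> Ypot u B True \<and> Xc u = x} - Pr P {u. Mobs u \<and> Ypot u W True \<and> Xc u = x})
              / Pr P {u. Mobs u}" for x
    using assms(2) M
    by (simp add: mean_ignorability_def has_cond_prob_def prob_obs_dist arm_mean_obs_dist conj_ac
        diff_divide_distrib right_diff_distrib mult.commute)
  have "(\<lambda>x. Pr P {u. Mobs u \<and> Ypot u z True \<and> Xc u = x}) sums Pr P {u. Mobs u \<and> Ypot u z True}" for z
    using sums_prob_vimage[of P "{u. Mobs u \<and> Ypot u z True}" Xc] by (simp add: vimage_def Int_def conj_ac)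
  then have "(\<lambda>x. measure_pmf.prob (obs_dist P) {(x', z, y). x' = x}
                * (arm_mean (obs_dist P) B x - arm_mean (obs_dist P) W x)) sums CDE_Ob P"
    unfolding stratum CDE_Ob_eq[OF M] by (intro sums_divide sums_diff)
  then show ?thesis
    by (simp add: stratified_limit_def sums_iff)
qed

lemma consistent_if_mean_ignorability: "overlap P \<Longrightarrow> mean_ignorability P \<Longrightarrow> consistent P"
  by (simp add: consistent_iff_stratified_limit stratified_limit_eq_CDE_Ob)

section \<open>Ignorability conditions\<close>

lemma SubI_if_SeqI:
  assumes "SeqI P"
  shows "SubI P"
  unfolding SubI_def
proof
  fix z
  let ?Y = "\<lambda>u. Ypot u z True"
  show "cond_indep_ev P {u. Mobs u} ?Y Zr Xc"
  proof (rule cond_indep_evI_race[where \<kappa>="\<lambda>a c. cond_prob P (\<lambda>u. ?Y u = a) (\<lambda>u. Xc u = c)"])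
    fix a r c
    have Y_Z: "cond_indep P ?Y Zr Xc"
      by (rule cond_indep_ev_pair_fst[where A'="\<lambda>u. Mpot u W"]) (use assms in \<open>simp add: SeqI_def\<close>)
    have Y_M: "cond_indep P ?Y Mobs (\<lambda>u. (Zr u, Xc u))"
      using assms by (simp add: SeqI_def)
    have arm: "has_cond_prob P (\<lambda>u. ?Y u = a) (\<lambda>u. Zr u = r \<and> Xc u = c) (cond_prob P (\<lambda>u. ?Y u = a) (\<lambda>u. Xc u = c))"
      using cond_indep_ev_has_cond_prob[OF Y_Z, of a r c] by simp
    have selected: "has_cond_prob P (\<lambda>u. ?Y u = a) (\<lambda>u. Mobs u \<and> Zr u = r \<and> Xc u = c)
                      (cond_prob P (\<lambda>u. ?Y u = a) (\<lambda>u. Zr u = r \<and> Xc u = c))"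
      using cond_indep_ev_has_cond_prob[OF Y_M, of a True "(r, c)"] by simp
    show "has_cond_prob P (\<lambda>u. ?Y u = a) (\<lambda>u. u \<in> {u. Mobs u} \<and> Zr u = r \<and> Xc u = c)
            (cond_prob P (\<lambda>u. ?Y u = a) (\<lambda>u. Xc u = c))"
    proof (cases "Pr P {u. Zr u = r \<and> Xc u = c} = 0")
      case True
      then show ?thesis
        by (rule has_cond_prob_null_mono[rotated]) simp
    next
      case False
      with arm selected show ?thesis
        by (simp add: has_cond_prob_iff)
    qed
  qed
qed

lemma mean_ignorabilityI:
  assumes "\<And>z r x. has_cond_prob P (\<lambda>u. Ypot u z True) (\<lambda>u. Mobs u \<and> Zr u = r \<and> Xc u = x)
                       (cond_prob P (\<lambda>u. Ypot u z True) (\<lambda>u. Mobs u \<and> Zr u = z \<and> Xc u = x))"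
  shows "mean_ignorability P"
  unfolding mean_ignorability_def
proof (intro allI)
  fix z x
  have "has_cond_prob P (\<lambda>u. Ypot u z True)
          (\<lambda>u. (Mobs u \<and> Zr u = W \<and> Xc u = x) \<or> (Mobs u \<and> Zr u = B \<and> Xc u = x))
          (cond_prob P (\<lambda>u. Ypot u z True) (\<lambda>u. Mobs u \<and> Zr u = z \<and> Xc u = x))"
    by (intro has_cond_prob_disj assms) auto
  then show "has_cond_prob P (\<lambda>u. Ypot u z True) (\<lambda>u. Mobs u \<and> Xc u = x)
               (cond_prob P (\<lambda>u. Ypot u z True) (\<lambda>u. Mobs u \<and> Zr u = z \<and> Xc u = x))"
    by (rule has_cond_prob_cong_set_pmf[THEN iffD1, rotated 2]) (use race.exhaust in auto)
qed

lemma mean_ignorability_if_SubI: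
  assumes "overlap P" and "SubI P"
  shows "mean_ignorability P"
proof (rule mean_ignorabilityI)
  fix z r x
  let ?Y = "\<lambda>u. Ypot u z True" and ?\<kappa> = "cond_prob P (\<lambda>u. Ypot u z True) (\<lambda>u. Mobs u \<and> Xc u = x)"
  have arm: "has_cond_prob P ?Y (\<lambda>u. Mobs u \<and> Zr u = r' \<and> Xc u = x) ?\<kappa>" for r'
    using assms(2) cond_indep_ev_has_cond_prob[of P "{u. Mobs u}" ?Y Zr Xc True r' x] by (simp add: SubI_def)
  show "has_cond_prob P ?Y (\<lambda>u. Mobs u \<and> Zr u = r \<and> Xc u = x) (cond_prob P ?Y (\<lambda>u. Mobs u \<and> Zr u = z \<and> Xc u = x))"
  proof (cases "Pr P {u. Mobs u \<and> Zr u = z \<and> Xc u = x} = 0")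
    case True
    then have "Pr P {u. Mobs u \<and> Xc u = x} = 0"
      using overlap_arm_pos[OF assms(1)] by blast
    then show ?thesis
      by (rule has_cond_prob_null_mono[rotated]) simp
  next
    case False
    then show ?thesis
      using arm[of z] arm[of r] by (simp add: has_cond_prob_iff)
  qed
qed

lemma TI_has_cond_prob_M:
  "TI P \<Longrightarrow> has_cond_prob P (\<lambda>u. Mpot u z) (\<lambda>u. Zr u = r \<and> Xc u = x) (cond_prob P (\<lambda>u. Mpot u z) (\<lambda>u. Xc u = x))"
  using cond_indep_ev_has_cond_prob[of P UNIV "\<lambda>u. Mpot u z" Zr Xc True r x] by (simp add: TI_def)

lemma TI_has_cond_prob_Y:
  "TI P \<Longrightarrow> has_cond_prob P (\<lambda>u. Ypot u z m) (\<lambda>u. (Mpot u W = a \<and> Mpot u B) \<and> Zr u = r \<and> Xc u = x)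
             (cond_prob P (\<lambda>u. Ypot u z m) (\<lambda>u. Mpot u W = a \<and> Mpot u B \<and> Xc u = x))"
  using cond_indep_ev_has_cond_prob[of P UNIV "\<lambda>u. Ypot u z m" Zr "\<lambda>u. (Mpot u W, Mpot u B, Xc u)" True r "(a, True, x)"]
  by (simp add: TI_def conj_ac)

lemma MI_has_cond_prob:
  "MI P \<Longrightarrow> has_cond_prob P (\<lambda>u. Ypot u z m) (\<lambda>u. Zr u = z \<and> Mpot u B \<and> Mpot u W = a \<and> Xc u = x)
             (cond_prob P (\<lambda>u. Ypot u z m) (\<lambda>u. Zr u = z \<and> Mpot u B \<and> Xc u = x))"
  using cond_indep_ev_has_cond_prob[of P "{u. Zr u = z \<and> Mpot u B}" "\<lambda>u. Ypot u z m" "\<lambda>u. Mpot u W" Xc True a x]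
  by (simp add: MI_def)

lemma TI_has_cond_prob_stratum:
  assumes TI: "TI P" and MM: "MM P"
  shows "has_cond_prob P (\<lambda>u. Mpot u W = a \<and> Mpot u B) (\<lambda>u. Zr u = r \<and> Xc u = x)
           (if a then cond_prob P (\<lambda>u. Mpot u W) (\<lambda>u. Xc u = x)
            else cond_prob P (\<lambda>u. Mpot u B) (\<lambda>u. Xc u = x) - cond_prob P (\<lambda>u. Mpot u W) (\<lambda>u. Xc u = x))"
proof (cases a)
  case True
  have "has_cond_prob P (\<lambda>u. Mpot u W \<and> Mpot u B) (\<lambda>u. Zr u = r \<and> Xc u = x)
          (cond_prob P (\<lambda>u. Mpot u W) (\<lambda>u. Xc u = x))"
    by (rule has_cond_prob_cong_set_pmf[THEN iffD1, OF _ _ TI_has_cond_prob_M[OF TI]])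
      (use MM in \<open>auto simp: MM_def\<close>)
  with True show ?thesis
    by simp
next
  case False
  with MM show ?thesis
    by (simp, intro has_cond_prob_diff TI_has_cond_prob_M[OF TI]) (auto simp: MM_def)
qed

lemma TI_transfer_stratum_mean:
  assumes TI: "TI P"
    and MM: "MM P"
    and "Pr P {u. Zr u = r \<and> Xc u = x} \<noteq> 0"
    and "has_cond_prob P (\<lambda>u. Ypot u z m) (\<lambda>u. (Mpot u W = a \<and> Mpot u B) \<and> Zr u = r \<and> Xc u = x) \<mu>"
  shows "has_cond_prob P (\<lambda>u. Ypot u z m) (\<lambda>u. (Mpot u W = a \<and> Mpot u B) \<and> Zr u = r' \<and> Xc u = x) \<mu>"
  by (rule has_cond_prob_transfer[OF TI_has_cond_prob_stratum[OF TI MM] TI_has_cond_prob_stratum[OF TI MM]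
        TI_has_cond_prob_Y[OF TI] TI_has_cond_prob_Y[OF TI] assms(3,4)])

text \<open>Under MM, M = 1 in arm w is the stratum (M(w), M(b)) = (1,1). MI gives it the mean of
  Y(b,1) over all of M(b) = 1 in arm b, and TI carries that mean over to arm w.\<close>

lemma TI_MI_MM_W_arm_mean_Y_B:
  assumes ov: "overlap P" and TI: "TI P" and MI: "MI P" and MM: "MM P"
  shows "has_cond_prob P (\<lambda>u. Ypot u B True) (\<lambda>u. Mobs u \<and> Zr u = W \<and> Xc u = x)
           (cond_prob P (\<lambda>u. Ypot u B True) (\<lambda>u. Mobs u \<and> Zr u = B \<and> Xc u = x))"
proof (cases "Pr P {u. Mobs u \<and> Xc u = x} = 0")
  case True
  then show ?thesis
    by (rule has_cond_prob_null_mono[rotated]) simp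
next
  case False
  let ?Y = "\<lambda>u. Ypot u B True"
  have "Mobs u \<and> Zr u = B \<and> Xc u = x \<longleftrightarrow> Zr u = B \<and> Mpot u B \<and> Xc u = x" for u
    by (auto simp: Mobs_def)
  then have B_arm: "cond_prob P ?Y (\<lambda>u. Mobs u \<and> Zr u = B \<and> Xc u = x)
                  = cond_prob P ?Y (\<lambda>u. Zr u = B \<and> Mpot u B \<and> Xc u = x)"
    by simp
  have "Pr P {u. Zr u = B \<and> Xc u = x} \<noteq> 0"
    using overlap_arm_pos[OF ov False, of B] by (rule prob_neq_0_mono[rotated]) simp
  moreover have "has_cond_prob P ?Y (\<lambda>u. (Mpot u W = True \<and> Mpot u B) \<and> Zr u = B \<and> Xc u = x)
                   (cond_prob P ?Y (\<lambda>u. Mobs u \<and> Zr u = B \<and> Xc u = x))"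
    using MI_has_cond_prob[OF MI, of B True True x] unfolding B_arm by (simp add: conj_ac)
  ultimately have "has_cond_prob P ?Y (\<lambda>u. (Mpot u W = True \<and> Mpot u B) \<and> Zr u = W \<and> Xc u = x)
                     (cond_prob P ?Y (\<lambda>u. Mobs u \<and> Zr u = B \<and> Xc u = x))"
    by (rule TI_transfer_stratum_mean[OF TI MM])
  then show ?thesis
    by (rule has_cond_prob_cong_set_pmf[THEN iffD1, rotated 2]) (use MM in \<open>auto simp: MM_def Mobs_def\<close>)
qed

text \<open>Under MM, M = 1 in arm b is the union of the strata (1,1) and (0,1). MI gives both of
  them the mean of Y(w,1) found in arm w, and TI carries these means over to arm b.\<close>

lemma TI_MI_MM_B_arm_mean_Y_W:
  assumes ov: "overlap P" and TI: "TI P" and MI: "MI P" and MM: "MM P"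
  shows "has_cond_prob P (\<lambda>u. Ypot u W True) (\<lambda>u. Mobs u \<and> Zr u = B \<and> Xc u = x)
           (cond_prob P (\<lambda>u. Ypot u W True) (\<lambda>u. Mobs u \<and> Zr u = W \<and> Xc u = x))"
proof (cases "Pr P {u. Mobs u \<and> Xc u = x} = 0")
  case True
  then show ?thesis
    by (rule has_cond_prob_null_mono[rotated]) simp
next
  case False
  let ?Y = "\<lambda>u. Ypot u W True"
  let ?cell = "\<lambda>a r u. (Mpot u W = a \<and> Mpot u B) \<and> Zr u = r \<and> Xc u = x"
  define \<mu> where "\<mu> = cond_prob P ?Y (\<lambda>u. Mobs u \<and> Zr u = W \<and> Xc u = x)"
  have W_arm: "Mobs u \<and> Zr u = W \<and> Xc u = x \<longleftrightarrow> ?cell True W u" if "u \<in> set_pmf P" for u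
    using MM that by (auto simp: MM_def Mobs_def)
  have "Pr P {u. Mobs u \<and> Zr u = W \<and> Xc u = x} = Pr P {u. ?cell True W u}"
    by (rule prob_cong_set_pmf) (rule W_arm)
  then have W_pos: "Pr P {u. ?cell True W u} \<noteq> 0"
    using overlap_arm_pos[OF ov False, of W] by simp
  have "has_cond_prob P ?Y (?cell True W) \<mu>"
    unfolding \<mu>_def using has_cond_prob_cond_prob
    by (rule has_cond_prob_cong_set_pmf[THEN iffD1, rotated 2]) (simp_all add: W_arm)
  moreover have MI_cell: "has_cond_prob P ?Y (?cell a W) (cond_prob P ?Y (\<lambda>u. Zr u = W \<and> Mpot u B \<and> Xc u = x))" for a
    using MI_has_cond_prob[OF MI, of W True a x] by (simp add: conj_ac)
  ultimately have W_cells: "has_cond_prob P ?Y (?cell a W) \<mu>" for a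
    using MI_cell[of True] MI_cell[of a] W_pos by (simp add: has_cond_prob_iff)
  have "Pr P {u. Zr u = W \<and> Xc u = x} \<noteq> 0"
    using W_pos by (rule prob_neq_0_mono[rotated]) simp
  then have B_cells: "has_cond_prob P ?Y (?cell a B) \<mu>" for a
    using W_cells by (rule TI_transfer_stratum_mean[OF TI MM])
  have "has_cond_prob P ?Y (\<lambda>u. ?cell True B u \<or> ?cell False B u) \<mu>"
    by (rule has_cond_prob_disj[OF _ B_cells B_cells]) simp
  then show ?thesis
    unfolding \<mu>_def[symmetric]
    by (rule has_cond_prob_cong_set_pmf[THEN iffD1, rotated 2]) (auto simp: Mobs_def)
qed

lemma mean_ignorability_if_TI_MI_MM:
  assumes "overlap P" "TI P" "MI P" "MM P"
  shows "mean_ignorability P"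
proof (rule mean_ignorabilityI)
  fix z r x
  show "has_cond_prob P (\<lambda>u. Ypot u z True) (\<lambda>u. Mobs u \<and> Zr u = r \<and> Xc u = x)
          (cond_prob P (\<lambda>u. Ypot u z True) (\<lambda>u. Mobs u \<and> Zr u = z \<and> Xc u = x))"
    using TI_MI_MM_W_arm_mean_Y_B[OF assms] TI_MI_MM_B_arm_mean_Y_W[OF assms] has_cond_prob_cond_prob
    by (cases z; cases r) auto
qed

section \<open>Counterexamples\<close>

lemma prob_map_pmf_of_set:
  assumes "finite S" "S \<noteq> {}"
  shows "measure_pmf.prob (map_pmf g (pmf_of_set S)) {u. \<phi> u} = (\<Sum>s\<in>S. of_bool (\<phi> (g s))) / real (card S)"
  using assms by (simp add: measure_pmf_of_set vimage_def sum_of_bool_eq Int_def)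

text \<open>Every observed outcome is 0, and the effects +1 and -1 of the two units cancel, so
  \<open>\<Delta>\<^sub>n = 0 = CDE_Ob\<close>; yet Y(b,1) is a function of Z.\<close>

definition cancelling_unit :: "race \<Rightarrow> unit" where
  "cancelling_unit r = \<lparr>Xc = 0, Zr = r, Mpot = (\<lambda>_. True), Ypot = (\<lambda>z m. z \<noteq> r)\<rparr>"

definition P_cancelling :: "unit pmf" where
  "P_cancelling = map_pmf cancelling_unit (pmf_of_set {W, B})"

lemma prob_P_cancelling:
  "Pr P_cancelling {u. \<phi> u} = (of_bool (\<phi> (cancelling_unit W)) + of_bool (\<phi> (cancelling_unit B))) / 2"
  unfolding P_cancelling_def by (subst prob_map_pmf_of_set) auto

lemma overlap_P_cancelling: "overlap P_cancelling"
  unfolding overlap_def prob_P_cancelling by (auto simp: cancelling_unit_def Mobs_def) (metis race.exhaust)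

lemma consistent_P_cancelling: "consistent P_cancelling"
proof -
  have M: "Pr P_cancelling {u. Mobs u} \<noteq> 0"
    by (simp add: prob_P_cancelling cancelling_unit_def Mobs_def)
  have "arm_mean (obs_dist P_cancelling) z x = 0" for z x
    using M by (simp add: arm_mean_def prob_obs_dist prob_P_cancelling cancelling_unit_def Yobs_def Mobs_def)
  then have "stratified_limit (obs_dist P_cancelling) = 0"
    by (simp add: stratified_limit_def)
  moreover have "CDE_Ob P_cancelling = 0"
    using M by (simp add: CDE_Ob_eq prob_P_cancelling cancelling_unit_def Mobs_def)
  ultimately show ?thesis
    by (simp add: consistent_iff_stratified_limit[OF overlap_P_cancelling])
qed

lemma not_SubI_P_cancelling: "\<not> SubI P_cancelling"
proof
  assume "SubI P_cancelling"
  then have "cond_indep_ev P_cancelling {u. Mobs u} (\<lambda>u. Ypot u B True) Zr Xc"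
    by (simp add: SubI_def)
  from this[unfolded cond_indep_ev_def, rule_format, of True W 0] show False
    by (simp add: prob_P_cancelling cancelling_unit_def Mobs_def)
qed

lemma not_TI_P_cancelling: "\<not> TI P_cancelling"
proof
  assume "TI P_cancelling"
  then have "cond_indep P_cancelling (\<lambda>u. Ypot u B True) Zr (\<lambda>u. (Mpot u W, Mpot u B, Xc u))"
    by (simp add: TI_def)
  from this[unfolded cond_indep_ev_def, rule_format, of True W "(True, True, 0)"] show False
    by (simp add: prob_P_cancelling cancelling_unit_def)
qed

text \<open>Y(z,1) = 0 makes SubI trivial, while Y(w,0) = [Z = b] violates SeqI.\<close>

definition untreated_outcome_unit :: "race \<Rightarrow> unit" where
  "untreated_outcome_unit r = \<lparr>Xc = 0, Zr = r, Mpot = (\<lambda>_. True), Ypot = (\<lambda>z m. \<not> m \<and> r = B)\<rparr>"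

definition P_untreated_outcome :: "unit pmf" where
  "P_untreated_outcome = map_pmf untreated_outcome_unit (pmf_of_set {W, B})"

lemma prob_P_untreated_outcome:
  "Pr P_untreated_outcome {u. \<phi> u}
     = (of_bool (\<phi> (untreated_outcome_unit W)) + of_bool (\<phi> (untreated_outcome_unit B))) / 2"
  unfolding P_untreated_outcome_def by (subst prob_map_pmf_of_set) auto

lemma overlap_P_untreated_outcome: "overlap P_untreated_outcome"
  unfolding overlap_def prob_P_untreated_outcome
  by (auto simp: untreated_outcome_unit_def Mobs_def) (metis race.exhaust)

lemma SubI_P_untreated_outcome: "SubI P_untreated_outcome"
  unfolding SubI_def
  by (intro allI cond_indep_ev_if_function[where h="\<lambda>_. False"])
    (auto simp: P_untreated_outcome_def untreated_outcome_unit_def)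

lemma not_SeqI_P_untreated_outcome: "\<not> SeqI P_untreated_outcome"
proof
  assume "SeqI P_untreated_outcome"
  then have "cond_indep P_untreated_outcome (\<lambda>u. (Ypot u W False, Mpot u W)) Zr Xc"
    by (simp add: SeqI_def)
  from this[unfolded cond_indep_ev_def, rule_format, of "(True, True)" B 0] show False
    by (simp add: prob_P_untreated_outcome untreated_outcome_unit_def)
qed

text \<open>M(b) = s and M(w) = \<open>\<not>\<close>s for a fair coin s independent of Z, so TI holds but MM fails:
  selection keeps the units with s in arm b and those without s in arm w. The estimator tends
  to 1 while CDE_Ob = 1/2.\<close>

definition non_monotone_unit :: "race \<times> bool \<Rightarrow> unit" where
  "non_monotone_unit rs = \<lparr>Xc = 0, Zr = fst rs, Mpot = (\<lambda>z. if z = B then snd rs else \<not> snd rs),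
                           Ypot = (\<lambda>z m. z = B \<and> m \<and> snd rs)\<rparr>"

definition P_non_monotone :: "unit pmf" where
  "P_non_monotone = map_pmf non_monotone_unit (pmf_of_set {(W, True), (W, False), (B, True), (B, False)})"

lemma prob_P_non_monotone:
  "Pr P_non_monotone {u. \<phi> u} =
     (of_bool (\<phi> (non_monotone_unit (W, True))) + of_bool (\<phi> (non_monotone_unit (W, False)))
      + of_bool (\<phi> (non_monotone_unit (B, True))) + of_bool (\<phi> (non_monotone_unit (B, False)))) / 4"
  unfolding P_non_monotone_def by (subst prob_map_pmf_of_set) auto

lemma overlap_P_non_monotone: "overlap P_non_monotone"
  unfolding overlap_def prob_P_non_monotone by (auto simp: non_monotone_unit_def Mobs_def) (metis race.exhaust)

lemma TI_P_non_monotone: "TI P_non_monotone"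
  unfolding TI_def
proof (intro allI conjI)
  fix z z' :: race and m :: bool
  show "cond_indep P_non_monotone (\<lambda>u. Ypot u z' m) Zr (\<lambda>u. (Mpot u W, Mpot u B, Xc u))"
    by (rule cond_indep_ev_if_function[where h="\<lambda>(w, b, x). z' = B \<and> m \<and> b"])
      (auto simp: P_non_monotone_def non_monotone_unit_def)
  show "cond_indep P_non_monotone (\<lambda>u. Mpot u z) Zr Xc"
    unfolding cond_indep_ev_def
  proof (intro allI)
    fix a b c
    show "Pr P_non_monotone {u. u \<in> UNIV \<and> Mpot u z = a \<and> Zr u = b \<and> Xc u = c} * Pr P_non_monotone {u. u \<in> UNIV \<and> Xc u = c}
        = Pr P_non_monotone {u. u \<in> UNIV \<and> Mpot u z = a \<and> Xc u = c} * Pr P_non_monotone {u. u \<in> UNIV \<and> Zr u = b \<and> Xc u = c}"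
      by (cases z; cases b; cases a; cases "c = 0") (auto simp: prob_P_non_monotone non_monotone_unit_def)
  qed
qed

lemma not_consistent_P_non_monotone: "\<not> consistent P_non_monotone"
proof -
  have M: "Pr P_non_monotone {u. Mobs u} \<noteq> 0"
    by (simp add: prob_P_non_monotone non_monotone_unit_def Mobs_def)
  have "measure_pmf.prob (obs_dist P_non_monotone) {(x', z, y). x' = x}
          * (arm_mean (obs_dist P_non_monotone) B x - arm_mean (obs_dist P_non_monotone) W x)
        = (if x = 0 then 1 else 0)" for x
    using M by (simp add: arm_mean_def prob_obs_dist prob_P_non_monotone non_monotone_unit_def Yobs_def Mobs_def)
  then have "stratified_limit (obs_dist P_non_monotone) = 1"
    using sums_single[of 0 "\<lambda>_. 1 :: real"] by (simp add: stratified_limit_def sums_iff)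
  moreover have "CDE_Ob P_non_monotone = 1 / 2"
    using M by (simp add: CDE_Ob_eq prob_P_non_monotone non_monotone_unit_def Mobs_def)
  ultimately show ?thesis
    by (simp add: consistent_iff_stratified_limit[OF overlap_P_non_monotone])
qed

theorem theorem10:
  shows
   "(\<forall>P. overlap P \<longrightarrow> SeqI P \<longrightarrow> SubI P)
  \<and> (\<exists>P. overlap P \<and> SubI P \<and> \<not> SeqI P)
  \<and> (\<forall>P. overlap P \<longrightarrow> SubI P \<longrightarrow> consistent P)
  \<and> (\<exists>P. overlap P \<and> consistent P \<and> \<not> SubI P)
  \<and> (\<exists>P. overlap P \<and> consistent P \<and> \<not> TI P)
  \<and> (\<exists>P. overlap P \<and> TI P \<and> \<not> consistent P)
  \<and> (\<forall>P. overlap P \<longrightarrow> TI P \<longrightarrow> MI P \<longrightarrow> MM P \<longrightarrow> consistent P)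
  \<and> (\<exists>P. overlap P \<and> consistent P \<and> \<not> (TI P \<and> MI P \<and> MM P))"
proof (intro conjI)
  show "\<forall>P. overlap P \<longrightarrow> SeqI P \<longrightarrow> SubI P"
    using SubI_if_SeqI by blast
  show "\<exists>P. overlap P \<and> SubI P \<and> \<not> SeqI P"
    using overlap_P_untreated_outcome SubI_P_untreated_outcome not_SeqI_P_untreated_outcome by blast
  show "\<forall>P. overlap P \<longrightarrow> SubI P \<longrightarrow> consistent P"
    using consistent_if_mean_ignorability mean_ignorability_if_SubI by blast
  show "\<exists>P. overlap P \<and> consistent P \<and> \<not> SubI P"
    using overlap_P_cancelling consistent_P_cancelling not_SubI_P_cancelling by blast
  show "\<exists>P. overlap P \<and> consistent P \<and> \<not> TI P"
    using overlap_P_cancelling consistent_P_cancelling not_TI_P_cancelling by blast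
  show "\<exists>P. overlap P \<and> TI P \<and> \<not> consistent P"
    using overlap_P_non_monotone TI_P_non_monotone not_consistent_P_non_monotone by blast
  show "\<forall>P. overlap P \<longrightarrow> TI P \<longrightarrow> MI P \<longrightarrow> MM P \<longrightarrow> consistent P"
    using consistent_if_mean_ignorability mean_ignorability_if_TI_MI_MM by blast
  show "\<exists>P. overlap P \<and> consistent P \<and> \<not> (TI P \<and> MI P \<and> MM P)"
    using overlap_P_cancelling consistent_P_cancelling not_TI_P_cancelling by blast
qed

end
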